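(* Let $\mu_1,\mu_2$ be partitions of the same length $r$ whose degree sequences (listed increasingly) agree in their first $r-1$ entries. If $R_{\mu_1}(x)=R_{\mu_2}(x)$, then either $\mu_1=\mu_2$, or one of $\mu_1,\mu_2$ is the partition $(0,\dots,0)$ of $0$ and the other is the partition $(1,0,\dots,0)$ of $1$.
   Context: $\mathrm{He}_k(x)$ denotes the monic probabilists' Hermite polynomial of degree $k$. A partition $\lambda=(\lambda_1\ge\dots\ge\lambda_r\ge0)$ may have zero parts; its degree sequence is $n_\lambda=(\lambda_r,\lambda_{r-1}+1,\dots,\lambda_1+r-1)$. $\mathrm{He}_\lambda=\mathrm{Wr}[\mathrm{He}_{n_1},\dots,\mathrm{He}_{n_r}]/\prod_{i<j}(n_j-n_i)$, monic of degree $|\lambda|$. Removing a $2$-hook means replacing an entry $a$ of $n_\lambda$ by $a-2\ge0$ with $a-2\notin n_\lambda$; removing $2$-hooks until impossible yields the $2$-core $\bar\lambda$, and $\mathrm{He}_\lambda(x)=x^{|\bar\lambda|}R_\lambda(x)$ with $R_\lambda\in\mathbb{Z}[x]$, $R_\lambda(0)\ne0$. *)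

theory Defs
  imports "HOL-Computational_Algebra.Polynomial" "HOL-Combinatorics.Permutations"
begin

text \<open>Monic probabilists' Hermite polynomials He_k (over the rationals).\<close>
fun hermite :: "nat \<Rightarrow> rat poly" where
  "hermite 0 = 1"
| "hermite (Suc 0) = [:0, 1:]"
| "hermite (Suc (Suc k)) = [:0, 1:] * hermite (Suc k) - smult (of_nat (Suc k)) (hermite k)"

text \<open>A partition of length r: list (lambda_1,...,lambda_r), weakly decreasing, zero parts allowed.\<close>
definition is_partition :: "nat list \<Rightarrow> bool" where
  "is_partition lam \<longleftrightarrow> sorted (rev lam)"

definition deg_seq :: "nat list \<Rightarrow> nat list" where
  "deg_seq lam = map (\<lambda>i. rev lam ! i + i) [0..<length lam]"

definition wronskian :: "nat \<Rightarrow> (nat \<Rightarrow> rat poly) \<Rightarrow> rat poly" where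
  "wronskian r f = (\<Sum>p | p permutes {0..<r}.
      of_int (sign p) * (\<Prod>i<r. (pderiv ^^ i) (f (p i))))"

definition hermite_part :: "nat list \<Rightarrow> rat poly" where
  "hermite_part lam =
     (let n = deg_seq lam; r = length lam in
      smult (1 / (\<Prod>j<r. \<Prod>i<j. (of_nat (n ! j) - of_nat (n ! i) :: rat)))
            (wronskian r (\<lambda>j. hermite (n ! j))))"

definition remove_2hook :: "nat set \<Rightarrow> nat set \<Rightarrow> bool" where
  "remove_2hook N M \<longleftrightarrow> (\<exists>a\<in>N. 2 \<le> a \<and> a - 2 \<notin> N \<and> M = insert (a - 2) (N - {a}))"

definition core_degs :: "nat list \<Rightarrow> nat set" where
  "core_degs lam = (SOME M. remove_2hook\<^sup>*\<^sup>* (set (deg_seq lam)) M \<and> (\<nexists>M'. remove_2hook M M'))"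

text \<open>|core|: size of the partition whose degree set (of r entries) is core_degs lam.\<close>
definition core_size :: "nat list \<Rightarrow> nat" where
  "core_size lam = \<Sum>(core_degs lam) - (length lam * (length lam - 1)) div 2"

definition R_part :: "nat list \<Rightarrow> rat poly" where
  "R_part lam = hermite_part lam div [:0, 1:] ^ core_size lam"

end

theory Submission
  imports Defs "Jordan_Normal_Form.Determinant"
begin

text \<open>
  Let \<open>n\<^sub>0 < \<dots> < n\<^sub>r\<^sub>-\<^sub>1\<close> be the degree sequence of \<open>\<lambda>\<close> and \<open>N = |\<lambda>|\<close>.
  Expanding the Wronskian by the Leibniz formula and keeping only the two top terms
  \<open>x\<^sup>n - n(n-1)/2 x\<^sup>n\<^sup>-\<^sup>2\<close> of each Hermite polynomial shows
  \<open>He\<^sub>\<lambda> = c D (x\<^sup>N - K/2 x\<^sup>N\<^sup>-\<^sup>2 + \<dots>)\<close>, where \<open>D = det (n\<^sub>j\<^sup>i\<^sup>\<down>)\<close> is a Vandermonde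
  determinant in falling-factorial form and
  \<open>K = \<Sigma> n\<^sub>j(n\<^sub>j-1) - \<Sigma> i(i-1) - 2(r-1)(\<Sigma> n\<^sub>j - \<Sigma> i)\<close> (\<open>second_coeff_factor\<close>);
  the computation of the second coefficient reduces to determinants with two equal rows.
  Hence \<open>R\<^sub>\<lambda>\<close> has degree \<open>d = |\<lambda>| - |core|\<close>, which is even, and if \<open>d \<ge> 2\<close> its coefficient
  in degree \<open>d - 2\<close> is \<open>-K/2\<close> times its leading coefficient.

  If \<open>R\<^sub>\<mu>\<^sub>1 = R\<^sub>\<mu>\<^sub>2\<close> and the degree sequences differ only in their last entries \<open>a < b\<close>,
  then either \<open>d \<ge> 2\<close> and the equality of the two values of \<open>K\<close> reads
  \<open>(b - a)(a + b - 2r + 1) = 0\<close>, or \<open>d = 0\<close>, both partitions are 2-cores and their degree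
  sets are closed under \<open>x \<mapsto> x - 2\<close>. Either way \<open>a = r - 1\<close> and \<open>b = r\<close>.
\<close>

section \<open>Falling factorials\<close>

definition falling :: "rat \<Rightarrow> nat \<Rightarrow> rat" where
  "falling t i = (\<Prod>k<i. t - of_nat k)"

lemma falling_0 [simp]: "falling t 0 = 1"
  by (simp add: falling_def)

lemma falling_Suc: "falling t (Suc i) = falling t i * (t - of_nat i)"
  by (simp add: falling_def)

lemma falling_of_nat_eq_0: "n < i \<Longrightarrow> falling (of_nat n) i = 0"
  unfolding falling_def by (rule prod_zero) (auto intro!: bexI[of _ n])

lemma falling_add_2: "falling t (i + 2) = falling t 2 * falling (t - 2) i"
proof (induction i)
  case 0
  then show ?case by (simp add: numeral_2_eq_2)
next
  case (Suc i)
  have "falling t (Suc i + 2) = falling t (i + 2) * (t - of_nat (i + 2))"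
    by (metis add_Suc falling_Suc)
  also have "\<dots> = falling t 2 * falling (t - 2) i * (t - of_nat (i + 2))"
    by (simp only: Suc.IH)
  also have "\<dots> = falling t 2 * (falling (t - 2) i * (t - 2 - of_nat i))"
    by (simp add: algebra_simps)
  finally show ?case by (simp add: falling_Suc)
qed

lemma falling_add_2_recurrence:
  "falling t (i + 2) = (t * (t - 1) - of_nat i * (of_nat i - 1)) * falling t i
     - 2 * of_nat i * falling t (Suc i)"
  by (simp add: falling_Suc numeral_2_eq_2 algebra_simps)

definition falling_poly :: "nat \<Rightarrow> rat poly" where
  "falling_poly i = (\<Prod>k<i. [:- of_nat k, 1:])"

lemma poly_falling_poly: "poly (falling_poly i) t = falling t i"
  by (simp add: falling_poly_def falling_def poly_prod)

lemma degree_falling_poly: "degree (falling_poly i) = i"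
  unfolding falling_poly_def by (subst degree_prod_eq_sum_degree) auto

lemma lead_coeff_falling_poly: "lead_coeff (falling_poly i) = 1"
  unfolding falling_poly_def by (simp add: lead_coeff_prod)

lemma falling_det_nonzero:
  assumes "inj_on n {..<r}"
  shows "det (mat r r (\<lambda>(i, j). falling (of_nat (n j)) i)) \<noteq> 0"
proof
  \<comment> \<open>A kernel vector gives a nonzero polynomial of degree \<open>< r\<close> in the basis \<open>x\<^sup>i\<^sup>\<down>\<close>
     vanishing at the \<open>r\<close> distinct points \<open>n j\<close>.\<close>
  define M where "M = mat r r (\<lambda>(i, j). falling (of_nat (n j)) i)"
  assume "det (mat r r (\<lambda>(i, j). falling (of_nat (n j)) i)) = 0"
  then have "det (transpose_mat M) = 0"
    using det_transpose[of M r] unfolding M_def by simp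
  then obtain v where v: "v \<in> carrier_vec r" "v \<noteq> 0\<^sub>v r" "transpose_mat M *\<^sub>v v = 0\<^sub>v r"
    using det_0_iff_vec_prod_zero_field[of "transpose_mat M" r] unfolding M_def by auto
  define P where "P = (\<Sum>i<r. Polynomial.smult (v $ i) (falling_poly i))"
  have roots: "poly P (of_nat (n j)) = 0" if "j < r" for j
  proof -
    have "(transpose_mat M *\<^sub>v v) $ j = (\<Sum>i<r. falling (of_nat (n j)) i * v $ i)"
      using that v(1) unfolding M_def by (simp add: scalar_prod_def lessThan_atLeast0 mult.commute)
    then show ?thesis
      using v(3) that unfolding P_def by (simp add: poly_sum poly_falling_poly mult.commute)
  qed
  define I where "I = {i. i < r \<and> v $ i \<noteq> 0}"
  have "I \<noteq> {}"
    using v(1,2) unfolding I_def by (auto intro!: eq_vecI)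
  moreover have "finite I"
    unfolding I_def by simp
  ultimately have i0: "Max I < r" "v $ Max I \<noteq> 0" and above: "\<And>i. i \<in> I \<Longrightarrow> i \<le> Max I"
    using Max_in[of I] unfolding I_def by auto
  have "coeff P (Max I) = (\<Sum>i<r. v $ i * coeff (falling_poly i) (Max I))"
    unfolding P_def by (simp add: coeff_sum)
  also have "\<dots> = v $ Max I"
  proof (subst sum.remove[of _ "Max I"])
    have "v $ i * coeff (falling_poly i) (Max I) = 0" if "i < r" "i \<noteq> Max I" for i
    proof (cases "i < Max I")
      case True
      then show ?thesis by (simp add: coeff_eq_0 degree_falling_poly)
    next
      case False
      have "v $ i = 0"
      proof (rule ccontr)
        assume "v $ i \<noteq> 0"
        then have "i \<in> I"
          using that unfolding I_def by simp
        then show False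
          using above[of i] False that(2) by simp
      qed
      then show ?thesis by simp
    qed
    then show "v $ Max I * coeff (falling_poly (Max I)) (Max I)
        + (\<Sum>i\<in>{..<r} - {Max I}. v $ i * coeff (falling_poly i) (Max I)) = v $ Max I"
      using lead_coeff_falling_poly[of "Max I"] by (simp add: degree_falling_poly sum.neutral)
  qed (use i0 in auto)
  finally have "P \<noteq> 0"
    using i0 by auto
  have "degree P \<le> r - 1"
    unfolding P_def
    by (intro degree_sum_le) (auto intro: order_trans[OF degree_smult_le] simp: degree_falling_poly)
  have "inj_on (\<lambda>j. of_nat (n j) :: rat) {..<r}"
    using assms unfolding inj_on_def by auto
  then have "r = card ((\<lambda>j. of_nat (n j) :: rat) ` {..<r})"
    by (simp add: card_image)
  also have "\<dots> \<le> card {x. poly P x = 0}"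
    using roots by (intro card_mono poly_roots_finite[OF \<open>P \<noteq> 0\<close>]) auto
  also have "\<dots> \<le> degree P"
    by (rule card_poly_roots_bound[OF \<open>P \<noteq> 0\<close>])
  finally show False
    using \<open>degree P \<le> r - 1\<close> i0 by linarith
qed

section \<open>Top terms of polynomials\<close>

definition lower_order :: "'a::comm_ring_1 poly \<Rightarrow> nat \<Rightarrow> bool" where
  "lower_order q e \<longleftrightarrow> q = 0 \<or> degree q + 3 \<le> e"

lemma lower_order_0 [simp]: "lower_order 0 e"
  by (simp add: lower_order_def)

lemma lower_order_add: "lower_order p e \<Longrightarrow> lower_order q e \<Longrightarrow> lower_order (p + q) e"
  unfolding lower_order_def using degree_add_le_max[of p q] by auto

lemma lower_order_mult: "lower_order q e \<Longrightarrow> degree p \<le> d \<Longrightarrow> lower_order (p * q) (e + d)"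
  unfolding lower_order_def using degree_mult_le[of p q] by auto

lemma lower_order_smult: "lower_order q e \<Longrightarrow> lower_order (Polynomial.smult c q) e"
  unfolding lower_order_def using degree_smult_le[of c q] by auto

lemma lower_order_degree_le: "lower_order q e \<Longrightarrow> degree q \<le> e"
  unfolding lower_order_def by auto

lemma coeff_lower_order: "lower_order q e \<Longrightarrow> e < k + 3 \<Longrightarrow> coeff q k = 0"
  unfolding lower_order_def by (auto intro: coeff_eq_0)

text \<open>
  \<open>top_terms g e a b\<close>: \<open>g = a x\<^sup>e + b x\<^sup>e\<^sup>-\<^sup>2 + (terms of degree \<le> e - 3)\<close>; the first conjunct
  rules out the junk reading of \<open>e - 2\<close> for \<open>e < 2\<close>.
\<close>

definition top_terms :: "'a::comm_ring_1 poly \<Rightarrow> nat \<Rightarrow> 'a \<Rightarrow> 'a \<Rightarrow> bool" where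
  "top_terms g e a b \<longleftrightarrow> (e < 2 \<longrightarrow> b = 0) \<and> lower_order (g - monom a e - monom b (e - 2)) e"

lemma top_termsE:
  assumes "top_terms g e a b"
  obtains q where "g = monom a e + monom b (e - 2) + q" "lower_order q e" "e < 2 \<longrightarrow> b = 0"
  using assms unfolding top_terms_def by (intro that[of "g - monom a e - monom b (e - 2)"]) auto

lemma top_terms_0: "top_terms 0 e 0 0"
  by (simp add: top_terms_def)

lemma top_terms_add:
  assumes "top_terms g e a b" "top_terms h e a' b'"
  shows "top_terms (g + h) e (a + a') (b + b')"
proof -
  have "lower_order (g - monom a e - monom b (e - 2) + (h - monom a' e - monom b' (e - 2))) e"
    using assms unfolding top_terms_def by (intro lower_order_add) auto
  then show ?thesis
    using assms unfolding top_terms_def by (simp add: add_monom[symmetric] algebra_simps)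
qed

lemma top_terms_smult: "top_terms g e a b \<Longrightarrow> top_terms (Polynomial.smult c g) e (c * a) (c * b)"
  unfolding top_terms_def
  using lower_order_smult[of "g - monom a e - monom b (e - 2)" e c]
  by (simp add: smult_monom[symmetric] smult_diff_right)

lemma top_terms_sum:
  "finite S \<Longrightarrow> (\<And>x. x \<in> S \<Longrightarrow> top_terms (g x) e (a x) (b x)) \<Longrightarrow>
   top_terms (\<Sum>x\<in>S. g x) e (\<Sum>x\<in>S. a x) (\<Sum>x\<in>S. b x)"
  by (induction S rule: finite_induct) (auto simp: top_terms_0 intro: top_terms_add)

lemma top_terms_mult:
  assumes "top_terms g e a b" "top_terms h e' a' b'"
  shows "top_terms (g * h) (e + e') (a * a') (a * b' + b * a')"
proof -
  obtain q where g: "g = monom a e + monom b (e - 2) + q" and q: "lower_order q e"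
    and b: "e < 2 \<longrightarrow> b = 0"
    using assms(1) by (rule top_termsE)
  obtain q' where h: "h = monom a' e' + monom b' (e' - 2) + q'" and q': "lower_order q' e'"
    and b': "e' < 2 \<longrightarrow> b' = 0"
    using assms(2) by (rule top_termsE)
  define R where "R = monom (b * b') (e - 2 + (e' - 2)) + monom a e * q' + monom b (e - 2) * q'
     + q * monom a' e' + q * monom b' (e' - 2) + q * q'"
  have shift: "monom (a * b') (e + (e' - 2)) = monom (a * b') (e + e' - 2)"
    "monom (a' * b) (e' + (e - 2)) = monom (a' * b) (e + e' - 2)"
    using b b' by (cases "e < 2"; cases "e' < 2"; simp add: add.commute)+
  have gh: "g * h = monom (a * a') (e + e') + monom (a * b' + b * a') (e + e' - 2) + R"
    unfolding g h R_def
    by (simp add: algebra_simps mult_monom shift add_monom[symmetric])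
  have "lower_order (monom (b * b') (e - 2 + (e' - 2))) (e + e')"
  proof (cases "b * b' = 0")
    case False
    then have "e \<ge> 2" "e' \<ge> 2"
      using b b' by auto
    then show ?thesis
      unfolding lower_order_def using degree_monom_le[of "b * b'" "e - 2 + (e' - 2)"] by linarith
  qed simp
  moreover have "lower_order (monom c k * q') (e' + e)" if "k \<le> e" for c k
    by (intro lower_order_mult[OF q'] order_trans[OF degree_monom_le that])
  moreover have "lower_order (monom c k * q) (e + e')" if "k \<le> e'" for c k
    by (intro lower_order_mult[OF q] order_trans[OF degree_monom_le that])
  moreover have "lower_order (q' * q) (e + e')"
    by (rule lower_order_mult[OF q lower_order_degree_le[OF q']])
  ultimately have "lower_order R (e + e')"
    unfolding R_def by (auto simp: add.commute mult.commute intro!: lower_order_add)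
  then show ?thesis
    unfolding top_terms_def using gh b b' by auto
qed

lemma top_terms_prod:
  "finite S \<Longrightarrow> (\<And>x. x \<in> S \<Longrightarrow> top_terms (g x) (e x) (a x) (b x)) \<Longrightarrow>
   top_terms (\<Prod>x\<in>S. g x) (\<Sum>x\<in>S. e x) (\<Prod>x\<in>S. a x) (\<Sum>x\<in>S. b x * (\<Prod>y\<in>S - {x}. a y))"
proof (induction S rule: finite_induct)
  case empty
  then show ?case by (simp add: top_terms_def)
next
  case (insert x F)
  have "top_terms (g x * (\<Prod>x\<in>F. g x)) (e x + (\<Sum>x\<in>F. e x)) (a x * (\<Prod>x\<in>F. a x))
     (a x * (\<Sum>y\<in>F. b y * (\<Prod>z\<in>F - {y}. a z)) + b x * (\<Prod>x\<in>F. a x))"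
    by (rule top_terms_mult) (use insert in auto)
  moreover have "insert x F - {y} = insert x (F - {y})" if "y \<in> F" for y
    using that insert by auto
  then have "(\<Sum>y\<in>F. b y * (\<Prod>z\<in>insert x F - {y}. a z)) = (\<Sum>y\<in>F. b y * (a x * (\<Prod>z\<in>F - {y}. a z)))"
    using insert by (intro sum.cong) auto
  ultimately show ?case
    using insert by (simp add: sum_distrib_left algebra_simps)
qed

lemma coeff_top_terms:
  assumes "top_terms g e a b"
  shows "k > e \<Longrightarrow> coeff g k = 0" and "coeff g e = a" and "2 \<le> e \<Longrightarrow> coeff g (e - 2) = b"
proof -
  obtain q where g: "g = monom a e + monom b (e - 2) + q" and q: "lower_order q e"
    and b: "e < 2 \<longrightarrow> b = 0"
    using assms by (rule top_termsE)
  show "k > e \<Longrightarrow> coeff g k = 0"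
    using coeff_lower_order[OF q, of k] by (auto simp: g coeff_monom)
  show "coeff g e = a"
    using coeff_lower_order[OF q, of e] b by (cases "e < 2") (auto simp: g coeff_monom)
  show "2 \<le> e \<Longrightarrow> coeff g (e - 2) = b"
    using coeff_lower_order[OF q, of "e - 2"] by (auto simp: g coeff_monom)
qed

lemma top_terms_of_coeffs:
  assumes "e < 2 \<longrightarrow> b = 0" "\<And>k. k > e \<Longrightarrow> coeff g k = 0" "coeff g e = a"
    "1 \<le> e \<Longrightarrow> coeff g (e - 1) = 0" "2 \<le> e \<Longrightarrow> coeff g (e - 2) = b"
  shows "top_terms g e a b"
proof -
  define q where "q = g - monom a e - monom b (e - 2)"
  have "coeff q k = 0" if "e < k + 3" for k
  proof -
    have "k > e \<or> k = e \<or> k + 1 = e \<or> k + 2 = e"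
      using that by linarith
    then show ?thesis
      using assms unfolding q_def by (elim disjE) (auto simp: coeff_monom)
  qed
  then have "lower_order q e"
  proof (cases "q = 0")
    case False
    then have "\<not> e < degree q + 3"
      using \<open>\<And>k. e < k + 3 \<Longrightarrow> coeff q k = 0\<close>[of "degree q"] by auto
    then show ?thesis
      unfolding lower_order_def by simp
  qed simp
  then show ?thesis
    unfolding top_terms_def q_def using assms(1) by simp
qed

section \<open>Hermite polynomials\<close>

lemma coeff_hermite:
  "(\<forall>k>n. coeff (hermite n) k = 0) \<and> coeff (hermite n) n = 1 \<and>
   (1 \<le> n \<longrightarrow> coeff (hermite n) (n - 1) = 0) \<and>
   (2 \<le> n \<longrightarrow> coeff (hermite n) (n - 2) = - falling (of_nat n) 2 / 2)"
proof (induction n rule: hermite.induct)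
  case 1
  then show ?case by (auto simp: coeff_1)
next
  case 2
  then show ?case by (auto simp: coeff_pCons split: nat.split)
next
  case (3 k)
  have c: "coeff (hermite (Suc (Suc k))) j =
      (if j = 0 then 0 else coeff (hermite (Suc k)) (j - 1)) - of_nat (Suc k) * coeff (hermite k) j" for j
    by (simp add: coeff_pCons split: nat.split)
  show ?case
    using 3 by (cases k) (auto simp: c coeff_pCons falling_def numeral_2_eq_2 field_simps split: nat.split)
qed

lemma coeff_pderiv_iterate:
  "coeff ((pderiv ^^ i) p) k = falling (of_nat (k + i)) i * coeff p (k + i)"
  by (induction i arbitrary: k) (simp_all add: coeff_pderiv falling_Suc algebra_simps)

lemma pderiv_iterate_hermite_eq_0: "m < i \<Longrightarrow> (pderiv ^^ i) (hermite m) = 0"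
  using coeff_hermite[of m] by (intro poly_eqI) (simp add: coeff_pderiv_iterate)

lemma top_terms_pderiv_iterate_hermite:
  "top_terms ((pderiv ^^ i) (hermite m)) (m - i) (falling (of_nat m) i) (- falling (of_nat m) (i + 2) / 2)"
proof (cases "m < i")
  case True
  then show ?thesis
    using top_terms_0 by (simp add: pderiv_iterate_hermite_eq_0 falling_of_nat_eq_0)
next
  case False
  note H = coeff_hermite[of m]
  show ?thesis
  proof (rule top_terms_of_coeffs)
    show "m - i < 2 \<longrightarrow> - falling (of_nat m) (i + 2) / 2 = 0"
      by (auto intro: falling_of_nat_eq_0)
    show "coeff ((pderiv ^^ i) (hermite m)) k = 0" if "k > m - i" for k
      using False H that by (auto simp: coeff_pderiv_iterate)
    show "coeff ((pderiv ^^ i) (hermite m)) (m - i) = falling (of_nat m) i"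
      using False H by (auto simp: coeff_pderiv_iterate)
    show "coeff ((pderiv ^^ i) (hermite m)) (m - i - 1) = 0" if "1 \<le> m - i"
    proof -
      have "m - i - 1 + i = m - 1"
        using that by auto
      then show ?thesis
        using H that by (simp add: coeff_pderiv_iterate)
    qed
    show "coeff ((pderiv ^^ i) (hermite m)) (m - i - 2) = - falling (of_nat m) (i + 2) / 2"
      if "2 \<le> m - i"
    proof -
      have "m - i - 2 + i = m - 2" "of_nat (m - 2) = (of_nat m - 2 :: rat)"
        using that by (auto simp: of_nat_diff)
      then show ?thesis
        using H that falling_add_2[of "of_nat m" i] by (simp add: coeff_pderiv_iterate mult.commute)
    qed
  qed
qed

section \<open>The two top terms of a Wronskian of Hermite polynomials\<close>

definition wronskian_lead :: "nat \<Rightarrow> (nat \<Rightarrow> nat) \<Rightarrow> rat" where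
  "wronskian_lead r n =
     (\<Sum>p | p permutes {0..<r}. of_int (sign p) * (\<Prod>i<r. falling (of_nat (n (p i))) i))"

definition wronskian_sub :: "nat \<Rightarrow> (nat \<Rightarrow> nat) \<Rightarrow> rat" where
  "wronskian_sub r n =
     (\<Sum>p | p permutes {0..<r}. of_int (sign p) *
        (\<Sum>i<r. (- falling (of_nat (n (p i))) (i + 2) / 2)
                  * (\<Prod>l\<in>{..<r} - {i}. falling (of_nat (n (p l))) l)))"

lemma sum_permutes_lessThan:
  fixes r :: nat
  assumes "p permutes {0..<r}"
  shows "(\<Sum>i<r. f (p i)) = (\<Sum>i<r. f i)"
proof -
  have "p permutes {..<r}"
    using assms by (simp only: atLeast0LessThan)
  then show ?thesis
    using sum.permute[of p "{..<r}" f] by (simp add: comp_def)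
qed

lemma top_terms_prod_pderiv_hermite:
  "top_terms (\<Prod>i<r. (pderiv ^^ i) (hermite (m i))) ((\<Sum>i<r. m i) - (\<Sum>i<r. i))
     (\<Prod>i<r. falling (of_nat (m i)) i)
     (\<Sum>i<r. (- falling (of_nat (m i)) (i + 2) / 2) * (\<Prod>l\<in>{..<r} - {i}. falling (of_nat (m l)) l))"
proof (cases "\<forall>i<r. i \<le> m i")
  case True
  have "(\<Sum>i<r. m i - i) + (\<Sum>i<r. i) = (\<Sum>i<r. m i)"
    by (subst sum.distrib[symmetric]) (rule sum.cong, use True in auto)
  then have exponent: "(\<Sum>i<r. m i - i) = (\<Sum>i<r. m i) - (\<Sum>i<r. i)"
    by linarith
  have "top_terms (\<Prod>i<r. (pderiv ^^ i) (hermite (m i))) (\<Sum>i<r. m i - i)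
     (\<Prod>i<r. falling (of_nat (m i)) i)
     (\<Sum>i<r. (- falling (of_nat (m i)) (i + 2) / 2) * (\<Prod>l\<in>{..<r} - {i}. falling (of_nat (m l)) l))"
    by (rule top_terms_prod) (simp, rule top_terms_pderiv_iterate_hermite)
  then show ?thesis
    unfolding exponent .
next
  case False
  \<comment> \<open>A vanishing factor kills the polynomial and both coefficients.\<close>
  then obtain i0 where i0: "i0 < r" "m i0 < i0"
    by auto
  have z: "falling (of_nat (m i0)) i0 = 0" "falling (of_nat (m i0)) (i0 + 2) = 0"
    using i0 by (auto intro: falling_of_nat_eq_0)
  have "(pderiv ^^ i0) (hermite (m i0)) = 0"
    using i0 by (simp add: pderiv_iterate_hermite_eq_0)
  then have "(\<Prod>i<r. (pderiv ^^ i) (hermite (m i))) = 0"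
    using i0 by (intro prod_zero) auto
  moreover have "(\<Prod>i<r. falling (of_nat (m i)) i) = 0"
    using i0 z by (intro prod_zero) auto
  moreover have "(- falling (of_nat (m i)) (i + 2) / 2) * (\<Prod>l\<in>{..<r} - {i}. falling (of_nat (m l)) l) = 0"
    for i
  proof (cases "i = i0")
    case False
    then have "(\<Prod>l\<in>{..<r} - {i}. falling (of_nat (m l)) l) = 0"
      using i0 z by (intro prod_zero) auto
    then show ?thesis by simp
  qed (use z in simp)
  then have "(\<Sum>i<r. (- falling (of_nat (m i)) (i + 2) / 2) * (\<Prod>l\<in>{..<r} - {i}. falling (of_nat (m l)) l)) = 0"
    by (intro sum.neutral) blast
  ultimately show ?thesis
    by (simp only: top_terms_0)
qed

lemma top_terms_wronskian_hermite:
  "top_terms (wronskian r (\<lambda>j. hermite (n j))) ((\<Sum>i<r. n i) - (\<Sum>i<r. i))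
     (wronskian_lead r n) (wronskian_sub r n)"
proof -
  have summand: "top_terms (\<Prod>i<r. (pderiv ^^ i) (hermite (n (p i)))) ((\<Sum>i<r. n i) - (\<Sum>i<r. i))
     (\<Prod>i<r. falling (of_nat (n (p i))) i)
     (\<Sum>i<r. (- falling (of_nat (n (p i))) (i + 2) / 2) * (\<Prod>l\<in>{..<r} - {i}. falling (of_nat (n (p l))) l))"
    if "p permutes {0..<r}" for p
    using top_terms_prod_pderiv_hermite[where m = "n \<circ> p" and r = r] sum_permutes_lessThan[OF that, of n] by simp
  have "wronskian r (\<lambda>j. hermite (n j)) = (\<Sum>p | p permutes {0..<r}.
      Polynomial.smult (of_int (sign p)) (\<Prod>i<r. (pderiv ^^ i) (hermite (n (p i)))))"
    unfolding wronskian_def by (simp add: of_int_poly)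
  moreover have "top_terms \<dots> ((\<Sum>i<r. n i) - (\<Sum>i<r. i)) (wronskian_lead r n) (wronskian_sub r n)"
    unfolding wronskian_lead_def wronskian_sub_def
    by (rule top_terms_sum) (simp add: finite_permutations, rule top_terms_smult, rule summand, simp)
  ultimately show ?thesis by simp
qed

text \<open>
  \<open>falling_det_row r n i c\<close> is the determinant of the matrix \<open>(n\<^sub>j\<^sup>l\<^sup>\<down>)\<^sub>l\<^sub>,\<^sub>j\<close> whose row \<open>i\<close>
  has been replaced by \<open>(c j)\<^sub>j\<close>.
\<close>

definition falling_det_row :: "nat \<Rightarrow> (nat \<Rightarrow> nat) \<Rightarrow> nat \<Rightarrow> (nat \<Rightarrow> rat) \<Rightarrow> rat" where
  "falling_det_row r n i c = (\<Sum>p | p permutes {0..<r}.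
     of_int (sign p) * (c (p i) * (\<Prod>l\<in>{..<r} - {i}. falling (of_nat (n (p l))) l)))"

lemma falling_det_row_diff:
  "falling_det_row r n i (\<lambda>j. c j - d j) = falling_det_row r n i c - falling_det_row r n i d"
  unfolding falling_det_row_def by (simp add: sum_subtractf algebra_simps)

lemma falling_det_row_cmult:
  "falling_det_row r n i (\<lambda>j. x * c j) = x * falling_det_row r n i c"
  unfolding falling_det_row_def by (simp add: sum_distrib_left algebra_simps)

lemma falling_det_row_self:
  "i < r \<Longrightarrow> falling_det_row r n i (\<lambda>j. falling (of_nat (n j)) i) = wronskian_lead r n"
  unfolding falling_det_row_def wronskian_lead_def by (simp add: prod.remove[of "{..<r}" i])

lemma sum_falling_det_row_weighted:
  "(\<Sum>i<r. falling_det_row r n i (\<lambda>j. w j * falling (of_nat (n j)) i)) = (\<Sum>j<r. w j) * wronskian_lead r n"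
proof -
  let ?F = "\<lambda>p l. falling (of_nat (n (p l))) l"
  have row: "(\<Sum>i<r. w (p i) * ?F p i * (\<Prod>l\<in>{..<r} - {i}. ?F p l)) = (\<Sum>j<r. w j) * (\<Prod>l<r. ?F p l)"
    if p: "p permutes {0..<r}" for p
  proof -
    have "w (p i) * ?F p i * (\<Prod>l\<in>{..<r} - {i}. ?F p l) = w (p i) * (\<Prod>l<r. ?F p l)" if "i < r" for i
      using that by (simp add: prod.remove[of "{..<r}" i] mult.assoc)
    then have "(\<Sum>i<r. w (p i) * ?F p i * (\<Prod>l\<in>{..<r} - {i}. ?F p l)) = (\<Sum>i<r. w (p i) * (\<Prod>l<r. ?F p l))"
      by (intro sum.cong) simp_all
    also have "\<dots> = (\<Sum>i<r. w (p i)) * (\<Prod>l<r. ?F p l)"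
      by (simp add: sum_distrib_right)
    finally show ?thesis
      by (simp only: sum_permutes_lessThan[OF p])
  qed
  have "(\<Sum>i<r. falling_det_row r n i (\<lambda>j. w j * falling (of_nat (n j)) i)) =
      (\<Sum>p | p permutes {0..<r}. of_int (sign p) * (\<Sum>i<r. w (p i) * ?F p i * (\<Prod>l\<in>{..<r} - {i}. ?F p l)))"
    unfolding falling_det_row_def by (simp add: sum.swap[of _ "{..<r}"] sum_distrib_left mult.assoc)
  also have "\<dots> = (\<Sum>p | p permutes {0..<r}. of_int (sign p) * ((\<Sum>j<r. w j) * (\<Prod>l<r. ?F p l)))"
    by (intro sum.cong refl) (simp add: row)
  finally show ?thesis
    unfolding wronskian_lead_def by (simp add: sum_distrib_left mult.left_commute)
qed

lemma falling_det_row_Suc_eq_0: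
  assumes "Suc i < r"
  shows "falling_det_row r n i (\<lambda>j. falling (of_nat (n j)) (Suc i)) = 0"
proof -
  define M where "M = mat r r (\<lambda>(l, j). if l = i then falling (of_nat (n j)) (Suc i) else falling (of_nat (n j)) l)"
  have M: "M \<in> carrier_mat r r"
    unfolding M_def by simp
  have "row M i = row M (Suc i)"
    unfolding M_def using assms by (intro eq_vecI) auto
  then have "det M = 0"
    using assms by (intro det_identical_rows[OF M, of i "Suc i"]) auto
  moreover have "det M = falling_det_row r n i (\<lambda>j. falling (of_nat (n j)) (Suc i))"
    unfolding det_def'[OF M] falling_det_row_def
  proof (rule sum.cong[OF refl])
    fix p assume "p \<in> {p. p permutes {0..<r}}"
    then have pl: "l < r \<Longrightarrow> p l < r" for l
      using permutes_in_image by fastforce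
    have "(\<Prod>l = 0..<r. M $$ (l, p l)) = M $$ (i, p i) * (\<Prod>l\<in>{..<r} - {i}. M $$ (l, p l))"
      using assms by (simp add: lessThan_atLeast0 prod.remove[of "{0..<r}" i])
    also have "\<dots> = falling (of_nat (n (p i))) (Suc i) * (\<Prod>l\<in>{..<r} - {i}. falling (of_nat (n (p l))) l)"
      unfolding M_def using assms pl by (auto intro!: prod.cong)
    finally show "of_int (sign p) * (\<Prod>l = 0..<r. M $$ (l, p l)) =
      of_int (sign p) * (falling (of_nat (n (p i))) (Suc i) * (\<Prod>l\<in>{..<r} - {i}. falling (of_nat (n (p l))) l))"
      by simp
  qed
  ultimately show ?thesis by simp
qed

lemma sum_falling_det_row_Suc:
  "(\<Sum>i<r. falling_det_row r n i (\<lambda>j. falling (of_nat (n j)) (Suc i))) =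
     ((\<Sum>j<r. of_nat (n j)) - (\<Sum>i<r. of_nat i)) * wronskian_lead r n"
proof -
  have "falling_det_row r n i (\<lambda>j. falling (of_nat (n j)) (Suc i)) =
      falling_det_row r n i (\<lambda>j. of_nat (n j) * falling (of_nat (n j)) i) - of_nat i * wronskian_lead r n"
    if "i < r" for i
  proof -
    have "(\<lambda>j. falling (of_nat (n j)) (Suc i)) =
        (\<lambda>j. of_nat (n j) * falling (of_nat (n j)) i - of_nat i * falling (of_nat (n j)) i)"
      by (simp add: falling_Suc algebra_simps)
    then show ?thesis
      by (simp only: falling_det_row_diff falling_det_row_cmult falling_det_row_self[OF that])
  qed
  then show ?thesis
    by (simp add: sum_subtractf sum_falling_det_row_weighted sum_distrib_right left_diff_distrib)
qed

definition second_coeff_factor :: "nat \<Rightarrow> (nat \<Rightarrow> nat) \<Rightarrow> rat" where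
  "second_coeff_factor r n =
     (\<Sum>j<r. of_nat (n j) * (of_nat (n j) - 1)) - (\<Sum>i<r. of_nat i * (of_nat i - 1))
     - 2 * of_nat (r - 1) * ((\<Sum>j<r. of_nat (n j)) - (\<Sum>i<r. of_nat i))"

lemma falling_det_row_add_2:
  assumes "i < r"
  shows "falling_det_row r n i (\<lambda>j. falling (of_nat (n j)) (i + 2)) =
      falling_det_row r n i (\<lambda>j. of_nat (n j) * (of_nat (n j) - 1) * falling (of_nat (n j)) i)
      - of_nat i * (of_nat i - 1) * wronskian_lead r n
      - 2 * of_nat i * falling_det_row r n i (\<lambda>j. falling (of_nat (n j)) (Suc i))"
proof -
  have "(\<lambda>j. falling (of_nat (n j)) (i + 2)) =
      (\<lambda>j. of_nat (n j) * (of_nat (n j) - 1) * falling (of_nat (n j)) i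
        - of_nat i * (of_nat i - 1) * falling (of_nat (n j)) i - 2 * of_nat i * falling (of_nat (n j)) (Suc i))"
    by (simp only: falling_add_2_recurrence) (simp add: algebra_simps)
  then show ?thesis
    by (simp only: falling_det_row_diff falling_det_row_cmult falling_det_row_self[OF assms])
qed

lemma weighted_sum_falling_det_row_Suc:
  "(\<Sum>i<r. of_nat i * falling_det_row r n i (\<lambda>j. falling (of_nat (n j)) (Suc i))) =
     of_nat (r - 1) * ((\<Sum>j<r. of_nat (n j)) - (\<Sum>i<r. of_nat i)) * wronskian_lead r n"
proof -
  let ?S = "\<lambda>i. falling_det_row r n i (\<lambda>j. falling (of_nat (n j)) (Suc i))"
  have "of_nat i * ?S i = of_nat (r - 1) * ?S i" if "i < r" for i
  proof (cases "Suc i < r")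
    case True
    \<comment> \<open>Only the row \<open>i = r - 1\<close> survives: the other determinants have two equal rows.\<close>
    then show ?thesis by (simp add: falling_det_row_Suc_eq_0)
  next
    case False
    then show ?thesis using that by (simp add: not_less_eq)
  qed
  then have "(\<Sum>i<r. of_nat i * ?S i) = (\<Sum>i<r. of_nat (r - 1) * ?S i)"
    by (intro sum.cong) simp_all
  also have "\<dots> = of_nat (r - 1) * (\<Sum>i<r. ?S i)"
    by (rule sum_distrib_left[symmetric])
  finally show ?thesis
    by (simp only: sum_falling_det_row_Suc mult.assoc)
qed

lemma wronskian_sub_eq_sum_falling_det_row:
  "wronskian_sub r n = - (\<Sum>i<r. falling_det_row r n i (\<lambda>j. falling (of_nat (n j)) (i + 2))) / 2"
proof -
  let ?F = "\<lambda>p l. falling (of_nat (n (p l))) l"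
  have "wronskian_sub r n = (\<Sum>p | p permutes {0..<r}.
      \<Sum>i<r. - (of_int (sign p) * (falling (of_nat (n (p i))) (i + 2) * (\<Prod>l\<in>{..<r} - {i}. ?F p l))) / 2)"
    unfolding wronskian_sub_def by (intro sum.cong refl) (simp add: sum_distrib_left)
  then show ?thesis
    unfolding falling_det_row_def by (simp add: sum.swap[of _ "{..<r}"] sum_divide_distrib sum_negf)
qed

lemma wronskian_sub_eq: "wronskian_sub r n = - second_coeff_factor r n / 2 * wronskian_lead r n"
proof -
  let ?D = "wronskian_lead r n"
  let ?S = "\<lambda>i. falling_det_row r n i (\<lambda>j. falling (of_nat (n j)) (Suc i))"
  have "(\<Sum>i<r. falling_det_row r n i (\<lambda>j. falling (of_nat (n j)) (i + 2))) = (\<Sum>i<r.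
      falling_det_row r n i (\<lambda>j. of_nat (n j) * (of_nat (n j) - 1) * falling (of_nat (n j)) i)
      - of_nat i * (of_nat i - 1) * ?D - 2 * of_nat i * ?S i)"
    by (intro sum.cong refl falling_det_row_add_2) simp
  also have "\<dots> = (\<Sum>j<r. of_nat (n j) * (of_nat (n j) - 1)) * ?D - (\<Sum>i<r. of_nat i * (of_nat i - 1)) * ?D
      - 2 * (\<Sum>i<r. of_nat i * ?S i)"
    by (simp only: sum_subtractf sum_falling_det_row_weighted) (simp add: sum_distrib_left sum_distrib_right mult.assoc)
  finally show ?thesis
    unfolding wronskian_sub_eq_sum_falling_det_row weighted_sum_falling_det_row_Suc second_coeff_factor_def
    by (simp add: algebra_simps)
qed

lemma wronskian_lead_eq_det: "wronskian_lead r n = det (mat r r (\<lambda>(i, j). falling (of_nat (n j)) i))"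
  unfolding wronskian_lead_def det_def'[OF mat_carrier]
proof (rule sum.cong[OF refl])
  fix p assume "p \<in> {p. p permutes {0..<r}}"
  then have "l < r \<Longrightarrow> p l < r" for l
    using permutes_in_image by fastforce
  then show "of_int (sign p) * (\<Prod>i<r. falling (of_nat (n (p i))) i) =
     of_int (sign p) * (\<Prod>i = 0..<r. mat r r (\<lambda>(i, j). falling (of_nat (n j)) i) $$ (i, p i))"
    by (simp add: lessThan_atLeast0)
qed

lemma wronskian_lead_nonzero: "inj_on n {..<r} \<Longrightarrow> wronskian_lead r n \<noteq> 0"
  by (simp add: wronskian_lead_eq_det falling_det_nonzero)

section \<open>Degree sequences and 2-cores\<close>

lemma length_deg_seq [simp]: "length (deg_seq lam) = length lam"
  by (simp add: deg_seq_def)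

lemma nth_deg_seq: "i < length lam \<Longrightarrow> deg_seq lam ! i = rev lam ! i + i"
  by (simp add: deg_seq_def)

lemma deg_seq_strict_mono:
  assumes "is_partition lam" "i < j" "j < length lam"
  shows "deg_seq lam ! i < deg_seq lam ! j"
proof -
  have "rev lam ! i \<le> rev lam ! j"
    using assms unfolding is_partition_def by (intro sorted_nth_mono) auto
  then show ?thesis
    using assms by (simp add: nth_deg_seq)
qed

lemma distinct_deg_seq: "is_partition lam \<Longrightarrow> distinct (deg_seq lam)"
  by (auto simp: distinct_conv_nth dest: deg_seq_strict_mono simp del: length_deg_seq)
    (metis deg_seq_strict_mono length_deg_seq less_irrefl nat_neq_iff)

lemma inj_deg_seq: "inj deg_seq"
proof
  fix lam mu :: "nat list"
  assume eq: "deg_seq lam = deg_seq mu"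
  then have "length lam = length mu"
    by (metis length_deg_seq)
  moreover have "rev lam ! i = rev mu ! i" if "i < length lam" for i
    using arg_cong[OF eq, of "\<lambda>xs. xs ! i"] that \<open>length lam = length mu\<close> by (simp add: nth_deg_seq)
  ultimately have "rev lam = rev mu"
    by (intro nth_equalityI) auto
  then show "lam = mu"
    by simp
qed

lemma sum_set_deg_seq:
  assumes "is_partition lam"
  shows "\<Sum>(set (deg_seq lam)) = sum_list lam + (\<Sum>i<length lam. i)"
proof -
  have "\<Sum>(set (deg_seq lam)) = (\<Sum>i<length lam. rev lam ! i + i)"
    using distinct_deg_seq[OF assms]
    by (simp add: sum.distinct_set_conv_list sum_list_sum_nth lessThan_atLeast0 nth_deg_seq)
  also have "\<dots> = sum_list (rev lam) + (\<Sum>i<length lam. i)"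
    by (simp add: sum.distrib sum_list_sum_nth lessThan_atLeast0)
  finally show ?thesis by simp
qed

lemma remove_2hook_card_sum:
  assumes "remove_2hook N M" "finite N"
  shows "finite M \<and> card M = card N \<and> \<Sum>M + 2 = \<Sum>N"
proof -
  obtain a where a: "a \<in> N" "2 \<le> a" "a - 2 \<notin> N" and M: "M = insert (a - 2) (N - {a})"
    using assms(1) unfolding remove_2hook_def by blast
  have "card M = Suc (card (N - {a}))"
    using M a assms(2) by simp
  also have "\<dots> = card N"
    by (rule card_Suc_Diff1[OF assms(2) a(1)])
  finally have "card M = card N" .
  moreover have "\<Sum>M = (a - 2) + \<Sum>(N - {a})" "\<Sum>N = a + \<Sum>(N - {a})"
    using M a assms(2) by (simp_all add: sum.remove)
  ultimately show ?thesis
    using M a(2) assms(2) by auto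
qed

lemma remove_2hooks_card_sum:
  assumes "remove_2hook\<^sup>*\<^sup>* N M" "finite N"
  shows "finite M \<and> card M = card N \<and> \<Sum>M \<le> \<Sum>N \<and> even (\<Sum>N - \<Sum>M) \<and> (\<Sum>M = \<Sum>N \<longrightarrow> M = N)"
  using assms(1)
proof (induction rule: rtranclp_induct)
  case base
  then show ?case using assms(2) by simp
next
  case (step M M')
  then have "finite M' \<and> card M' = card M \<and> \<Sum>M' + 2 = \<Sum>M"
    using remove_2hook_card_sum by blast
  moreover from this step.IH have "\<Sum>N - \<Sum>M' = (\<Sum>N - \<Sum>M) + 2"
    by linarith
  ultimately show ?case
    using step.IH by auto
qed

lemma remove_2hooks_terminates: "finite N \<Longrightarrow> \<exists>M. remove_2hook\<^sup>*\<^sup>* N M \<and> (\<nexists>M'. remove_2hook M M')"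
proof (induction "\<Sum>N" arbitrary: N rule: less_induct)
  case less
  show ?case
  proof (cases "\<exists>M'. remove_2hook N M'")
    case True
    then obtain M' where M': "remove_2hook N M'"
      by blast
    then have "finite M'" "\<Sum>M' < \<Sum>N"
      using remove_2hook_card_sum[OF M' less.prems] by auto
    then obtain M where "remove_2hook\<^sup>*\<^sup>* M' M" "\<nexists>M''. remove_2hook M M''"
      using less.hyps by blast
    then show ?thesis
      using M' by (meson converse_rtranclp_into_rtranclp)
  qed auto
qed

lemma core_degs:
  "remove_2hook\<^sup>*\<^sup>* (set (deg_seq lam)) (core_degs lam) \<and> (\<nexists>M. remove_2hook (core_degs lam) M)"
  unfolding core_degs_def by (rule someI_ex) (rule remove_2hooks_terminates, simp)

lemma sum_lessThan_card_le: "finite (M :: nat set) \<Longrightarrow> \<Sum>{..<card M} \<le> \<Sum>M"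
proof (induction "card M" arbitrary: M)
  case 0
  then show ?case by simp
next
  case (Suc r)
  \<comment> \<open>Remove the maximum \<open>x\<close>, which is at least \<open>r\<close> as \<open>M \<subseteq> {..x}\<close>.\<close>
  define x where "x = Max M"
  have x: "x \<in> M" "M \<subseteq> {..x}"
    using Suc Max_in[of M] Max_ge[of M] unfolding x_def by fastforce+
  then have "r \<le> x"
    using Suc.hyps(2) card_mono[of "{..x}" M] by simp
  moreover have "card (M - {x}) = r"
    using Suc.hyps(2) Suc.prems x by simp
  then have "\<Sum>{..<r} \<le> \<Sum>(M - {x})"
    using Suc.hyps(1)[of "M - {x}"] Suc.prems by simp
  ultimately show ?case
    using x Suc by (simp add: sum.remove[of M x] flip: Suc.hyps(2))
qed

lemma double_sum_lessThan: "2 * (\<Sum>i<r. i) = r * (r - 1::nat)"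
  by (induction r) (auto simp: algebra_simps)

lemma
  assumes "is_partition lam"
  shows core_size_le_sum_list: "core_size lam \<le> sum_list lam"
    and even_sum_list_minus_core_size: "even (sum_list lam - core_size lam)"
    and closed_deg_seq_if_core: "core_size lam = sum_list lam \<Longrightarrow> x \<in> set (deg_seq lam) \<Longrightarrow> 2 \<le> x \<Longrightarrow>
      x - 2 \<in> set (deg_seq lam)"
proof -
  define N where "N = set (deg_seq lam)"
  define M where "M = core_degs lam"
  have M: "finite M \<and> card M = card N \<and> \<Sum>M \<le> \<Sum>N \<and> even (\<Sum>N - \<Sum>M) \<and> (\<Sum>M = \<Sum>N \<longrightarrow> M = N)"
    using core_degs[of lam] unfolding N_def M_def by (intro remove_2hooks_card_sum) auto
  have "card N = length lam"
    unfolding N_def using distinct_card[OF distinct_deg_seq[OF assms]] by simp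
  then have "(\<Sum>i<length lam. i) \<le> \<Sum>M"
    using M sum_lessThan_card_le[of M] by (simp add: lessThan_def)
  moreover have "core_size lam = \<Sum>M - (\<Sum>i<length lam. i)"
    unfolding core_size_def M_def using double_sum_lessThan[of "length lam"] by simp
  moreover have "\<Sum>N = sum_list lam + (\<Sum>i<length lam. i)"
    unfolding N_def by (rule sum_set_deg_seq[OF assms])
  ultimately have size: "core_size lam \<le> sum_list lam" "sum_list lam - core_size lam = \<Sum>N - \<Sum>M"
    using M by linarith+
  then show "core_size lam \<le> sum_list lam" "even (sum_list lam - core_size lam)"
    using M by (simp, simp only: size(2))
  assume "core_size lam = sum_list lam" "x \<in> set (deg_seq lam)" "2 \<le> x"
  then have "M = N"
    using M size by simp
  then show "x - 2 \<in> set (deg_seq lam)"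
    using core_degs[of lam] \<open>x \<in> set (deg_seq lam)\<close> \<open>2 \<le> x\<close>
    unfolding remove_2hook_def M_def N_def by blast
qed

section \<open>The top coefficients of \<open>R\<^sub>\<lambda>\<close>\<close>

lemma coeff_div_X_power: "coeff (p div [:0, 1::'a::field:] ^ k) i = coeff p (i + k)"
proof -
  have X: "[:0, 1::'a:] ^ k = monom 1 k"
    by (simp add: monom_altdef)
  have split: "p = poly_cutoff k p + poly_shift k p * monom 1 k"
    by (rule poly_eqI) (auto simp: coeff_poly_cutoff coeff_poly_shift coeff_monom_mult mult.commute[of _ "monom _ _"])
  have "degree (poly_cutoff k p) < k \<or> poly_cutoff k p = 0"
    by (metis coeff_poly_cutoff leading_coeff_0_iff not_less)
  then have "poly_cutoff k p div monom 1 k = 0"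
    by (auto intro: div_poly_less simp: degree_monom_eq)
  then have "p div monom 1 k = poly_shift k p"
    by (subst split) simp
  then show ?thesis
    unfolding X by (simp add: coeff_poly_shift)
qed

lemma top_terms_hermite_part:
  assumes "is_partition lam"
  defines "r \<equiv> length lam" and "n \<equiv> (!) (deg_seq lam)"
  obtains c where "c \<noteq> 0" "wronskian_lead r n \<noteq> 0"
    "top_terms (hermite_part lam) (sum_list lam) (c * wronskian_lead r n) (c * wronskian_sub r n)"
proof
  have mono: "n i < n j" if "i < j" "j < r" for i j
    using deg_seq_strict_mono[OF assms(1) that(1)] that unfolding n_def r_def by simp
  define V where "V = (\<Prod>j<r. \<Prod>i<j. (of_nat (n j) - of_nat (n i) :: rat))"
  show "1 / V \<noteq> 0"
    unfolding V_def by (auto dest: mono)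
  show "wronskian_lead r n \<noteq> 0"
    by (rule wronskian_lead_nonzero) (metis inj_onI lessThan_iff mono nat_neq_iff)
  have "(\<Sum>i<r. n i) - (\<Sum>i<r. i) = sum_list lam"
    using sum_set_deg_seq[OF assms(1)] distinct_deg_seq[OF assms(1)]
    unfolding n_def r_def by (simp add: sum.distinct_set_conv_list sum_list_sum_nth lessThan_atLeast0)
  moreover have "hermite_part lam = Polynomial.smult (1 / V) (wronskian r (\<lambda>j. hermite (n j)))"
    unfolding hermite_part_def Let_def V_def r_def n_def by simp
  ultimately show "top_terms (hermite_part lam) (sum_list lam) (1 / V * wronskian_lead r n) (1 / V * wronskian_sub r n)"
    using top_terms_smult[OF top_terms_wronskian_hermite] by metis
qed

lemma
  assumes "is_partition lam"
  shows degree_R_part: "degree (R_part lam) = sum_list lam - core_size lam"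
    and lead_coeff_R_part_nonzero: "lead_coeff (R_part lam) \<noteq> 0"
    and coeff_R_part_sub: "2 \<le> degree (R_part lam) \<Longrightarrow>
      coeff (R_part lam) (degree (R_part lam) - 2) =
        - second_coeff_factor (length lam) ((!) (deg_seq lam)) / 2 * lead_coeff (R_part lam)"
proof -
  let ?d = "sum_list lam - core_size lam"
  let ?D = "wronskian_lead (length lam) ((!) (deg_seq lam))"
  obtain c where c: "c \<noteq> 0" "?D \<noteq> 0" and
    top: "top_terms (hermite_part lam) (sum_list lam) (c * ?D) (c * wronskian_sub (length lam) ((!) (deg_seq lam)))"
    using top_terms_hermite_part[OF assms] .
  have le: "core_size lam \<le> sum_list lam"
    by (rule core_size_le_sum_list[OF assms])
  have coeff_R: "coeff (R_part lam) j = coeff (hermite_part lam) (j + core_size lam)" for j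
    unfolding R_part_def by (rule coeff_div_X_power)
  have "coeff (R_part lam) ?d = c * ?D"
    using coeff_top_terms(2)[OF top] le by (simp add: coeff_R)
  moreover have "coeff (R_part lam) j = 0" if "j > ?d" for j
    using coeff_top_terms(1)[OF top] le that by (simp add: coeff_R)
  ultimately show deg: "degree (R_part lam) = ?d"
    using c by (metis degree_le le_antisym le_degree mult_eq_0_iff not_le)
  then show "lead_coeff (R_part lam) \<noteq> 0"
    using c \<open>coeff (R_part lam) ?d = c * ?D\<close> by simp
  assume "2 \<le> degree (R_part lam)"
  then have "coeff (R_part lam) (?d - 2) = c * wronskian_sub (length lam) ((!) (deg_seq lam))"
    using coeff_top_terms(3)[OF top] le deg by (simp add: coeff_R)
  then show "coeff (R_part lam) (degree (R_part lam) - 2) =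
      - second_coeff_factor (length lam) ((!) (deg_seq lam)) / 2 * lead_coeff (R_part lam)"
    using deg \<open>coeff (R_part lam) ?d = c * ?D\<close> by (simp add: wronskian_sub_eq)
qed

section \<open>Comparing two partitions\<close>

lemma second_coeff_factor_change_last:
  assumes "1 \<le> r" "\<And>j. j < r - 1 \<Longrightarrow> n j = n' j"
  shows "second_coeff_factor r n' - second_coeff_factor r n =
    (of_nat (n' (r - 1)) - of_nat (n (r - 1))) * (of_nat (n (r - 1)) + of_nat (n' (r - 1)) - 1 - 2 * of_nat (r - 1))"
proof -
  have split: "(\<Sum>j<r. f j) = (\<Sum>j<r - 1. f j) + f (r - 1)" for f :: "nat \<Rightarrow> rat"
    using assms(1) by (cases r) auto
  have common: "(\<Sum>j<r - 1. f (n j)) = (\<Sum>j<r - 1. f (n' j))" for f :: "nat \<Rightarrow> rat"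
    using assms(2) by (intro sum.cong) auto
  show ?thesis
    unfolding second_coeff_factor_def split[of "\<lambda>j. of_nat (n j) * (of_nat (n j) - 1)"]
      split[of "\<lambda>j. of_nat (n' j) * (of_nat (n' j) - 1)"] split[of "\<lambda>j. of_nat (n j)"] split[of "\<lambda>j. of_nat (n' j)"]
      common[of "\<lambda>x. of_nat x * (of_nat x - 1)"] common[of of_nat]
    by (simp add: algebra_simps)
qed

lemma closed_under_minus_2_insert_pair:
  fixes a b :: nat
  assumes S: "\<forall>s\<in>S. s < a" and "a < b"
    and closed_a: "\<And>x. x \<in> insert a S \<Longrightarrow> 2 \<le> x \<Longrightarrow> x - 2 \<in> insert a S"
    and closed_b: "\<And>x. x \<in> insert b S \<Longrightarrow> 2 \<le> x \<Longrightarrow> x - 2 \<in> insert b S"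
  shows "S = {..<a}" and "b = Suc a"
proof -
  have b_minus_2: "b - 2 \<in> S" if "2 \<le> b"
    using closed_b[of b] that \<open>a < b\<close> S by auto
  show b: "b = Suc a"
    using b_minus_2 S \<open>a < b\<close> by (cases "2 \<le> b") fastforce+
  have "x \<in> S" if "x < a" for x
    using that
  proof (induction "a - x" arbitrary: x rule: less_induct)
    case less
    consider "x + 1 = a" | "x + 2 = a" | "x + 2 < a"
      using less.prems by linarith
    then show ?case
    proof cases
      case 1
      then show ?thesis using b_minus_2 b by fastforce
    next
      case 2
      then show ?thesis using closed_a[of a] by auto
    next
      case 3
      then have "x + 2 \<in> S"
        using less.hyps[of "x + 2"] by auto
      then show ?thesis
        using closed_a[of "x + 2"] less.prems by auto
    qed
  qed
  then show "S = {..<a}"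
    using S by auto
qed

lemma last_entries_if_second_coeff_factor_eq:
  assumes r: "1 \<le> r" and common: "\<And>j. j < r - 1 \<Longrightarrow> n j = n' j"
    and "r - 1 \<le> n (r - 1)" "n (r - 1) < n' (r - 1)"
    and "second_coeff_factor r n = second_coeff_factor r n'"
  shows "n (r - 1) = r - 1 \<and> n' (r - 1) = r"
proof -
  let ?a = "n (r - 1)" and ?b = "n' (r - 1)"
  have "(of_nat ?b - of_nat ?a) * (of_nat ?a + of_nat ?b - 1 - 2 * of_nat (r - 1)) = (0::rat)"
    using second_coeff_factor_change_last[where n = n and n' = n', OF r common] assms(5) by simp
  then have "of_nat (?a + ?b) = (of_nat (2 * (r - 1) + 1) :: rat)"
    using assms(4) by simp
  then have "?a + ?b = 2 * (r - 1) + 1"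
    by (simp only: of_nat_eq_iff)
  then show ?thesis
    using assms(3,4) r by linarith
qed

lemma last_degrees_of_cores:
  assumes P1: "is_partition mu1" and P2: "is_partition mu2"
    and L1: "length mu1 = r" and L2: "length mu2 = r" and r: "1 \<le> r"
    and common: "\<And>j. j < r - 1 \<Longrightarrow> deg_seq mu1 ! j = deg_seq mu2 ! j"
    and ab: "deg_seq mu1 ! (r - 1) < deg_seq mu2 ! (r - 1)"
    and core1: "core_size mu1 = sum_list mu1" and core2: "core_size mu2 = sum_list mu2"
  shows "deg_seq mu1 ! (r - 1) = r - 1 \<and> deg_seq mu2 ! (r - 1) = r"
proof -
  define a where "a = deg_seq mu1 ! (r - 1)"
  define b where "b = deg_seq mu2 ! (r - 1)"
  define S where "S = set (take (r - 1) (deg_seq mu1))"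
  have "take (r - 1) (deg_seq mu1) = take (r - 1) (deg_seq mu2)"
    using L1 L2 common by (intro nth_equalityI) auto
  moreover have "xs = take (r - 1) xs @ [xs ! (r - 1)]" if "length xs = r" for xs :: "nat list"
    using take_Suc_conv_app_nth[of "r - 1" xs] r that by simp
  ultimately have sets: "set (deg_seq mu1) = insert a S" "set (deg_seq mu2) = insert b S"
    unfolding S_def a_def b_def using L1 L2 by (metis Un_insert_right append_Nil2 length_deg_seq list.set(2) set_append)+
  have below: "\<forall>s\<in>S. s < a"
  proof
    fix s assume "s \<in> S"
    then obtain j where "j < r - 1" "s = deg_seq mu1 ! j"
      unfolding S_def using L1 by (auto simp: in_set_conv_nth)
    then show "s < a"
      unfolding a_def using deg_seq_strict_mono[OF P1, of j "r - 1"] L1 r by simp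
  qed
  have closed_a: "x - 2 \<in> insert a S" if "x \<in> insert a S" "2 \<le> x" for x
    using closed_deg_seq_if_core[OF P1 core1] that sets by auto
  have closed_b: "x - 2 \<in> insert b S" if "x \<in> insert b S" "2 \<le> x" for x
    using closed_deg_seq_if_core[OF P2 core2] that sets by auto
  have "S = {..<a}" "b = Suc a"
    using closed_under_minus_2_insert_pair[OF below ab[folded a_def b_def] closed_a closed_b] by blast+
  moreover have "card S = r - 1"
    unfolding S_def using distinct_card[OF distinct_take[OF distinct_deg_seq[OF P1]]] L1 by simp
  ultimately show ?thesis
    using r unfolding a_def b_def by simp
qed

lemma last_degrees_if_R_part_eq:
  assumes P1: "is_partition mu1" and P2: "is_partition mu2"
    and L1: "length mu1 = r" and L2: "length mu2 = r" and r: "1 \<le> r"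
    and common: "\<And>j. j < r - 1 \<Longrightarrow> deg_seq mu1 ! j = deg_seq mu2 ! j"
    and ab: "deg_seq mu1 ! (r - 1) < deg_seq mu2 ! (r - 1)"
    and R: "R_part mu1 = R_part mu2"
  shows "deg_seq mu1 ! (r - 1) = r - 1 \<and> deg_seq mu2 ! (r - 1) = r"
proof -
  let ?d = "degree (R_part mu1)"
  consider "2 \<le> ?d" | "?d = 0"
    using even_sum_list_minus_core_size[OF P1] degree_R_part[OF P1]
    by (metis One_nat_def less_2_cases not_le odd_one)
  then show ?thesis
  proof cases
    case 1
    then have "second_coeff_factor r ((!) (deg_seq mu1)) = second_coeff_factor r ((!) (deg_seq mu2))"
      using coeff_R_part_sub[OF P1] coeff_R_part_sub[OF P2] lead_coeff_R_part_nonzero[OF P1] R L1 L2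
      by fastforce
    then show ?thesis
      using L1 r common ab by (intro last_entries_if_second_coeff_factor_eq) (simp_all add: nth_deg_seq)
  next
    case 2
    then show ?thesis
      using R degree_R_part[OF P1] degree_R_part[OF P2] core_size_le_sum_list[OF P1] core_size_le_sum_list[OF P2]
      by (intro last_degrees_of_cores[OF P1 P2 L1 L2 r common ab]) auto
  qed
qed

lemma partitions_with_last_degrees:
  assumes P1: "is_partition mu1" and L1: "length mu1 = r" and L2: "length mu2 = r" and r: "1 \<le> r"
    and common: "\<And>j. j < r - 1 \<Longrightarrow> deg_seq mu1 ! j = deg_seq mu2 ! j"
    and a: "deg_seq mu1 ! (r - 1) = r - 1" and b: "deg_seq mu2 ! (r - 1) = r"
  shows "mu1 = replicate r 0 \<and> mu2 = 1 # replicate (r - 1) 0"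
proof -
  have zero1: "rev mu1 ! i = 0" if "i < r" for i
  proof -
    have "rev mu1 ! i \<le> rev mu1 ! (r - 1)"
      using P1 that L1 unfolding is_partition_def by (intro sorted_nth_mono) auto
    then show ?thesis
      using a L1 r by (simp add: nth_deg_seq)
  qed
  have "rev mu2 ! i = (if i = r - 1 then 1 else 0)" if "i < r" for i
    using that common[of i] zero1[of i] b L1 L2 r by (auto simp: nth_deg_seq)
  then have "rev mu2 = rev (1 # replicate (r - 1) 0)"
    using L2 r by (intro nth_equalityI) (auto simp: nth_append)
  moreover have "rev mu1 = rev (replicate r 0)"
    using L1 zero1 by (intro nth_equalityI) auto
  ultimately show ?thesis
    unfolding rev_is_rev_conv by simp
qed

theorem mainTheorem20:
  fixes mu1 mu2 :: "nat list" and r :: nat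
  assumes "is_partition mu1" and "is_partition mu2"
    and "length mu1 = r" and "length mu2 = r"
    and "take (r - 1) (deg_seq mu1) = take (r - 1) (deg_seq mu2)"
    and "R_part mu1 = R_part mu2"
  shows "mu1 = mu2
    \<or> (mu1 = replicate r 0 \<and> mu2 = 1 # replicate (r - 1) 0)
    \<or> (mu2 = replicate r 0 \<and> mu1 = 1 # replicate (r - 1) 0)"
proof (cases "r = 0")
  case True
  then show ?thesis using assms(3,4) by simp
next
  case False
  then have r: "1 \<le> r" by simp
  have common: "deg_seq mu1 ! j = deg_seq mu2 ! j" if "j < r - 1" for j
    using arg_cong[OF assms(5), of "\<lambda>xs. xs ! j"] that by simp
  consider "deg_seq mu1 ! (r - 1) = deg_seq mu2 ! (r - 1)"
    | "deg_seq mu1 ! (r - 1) < deg_seq mu2 ! (r - 1)"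
    | "deg_seq mu2 ! (r - 1) < deg_seq mu1 ! (r - 1)"
    by linarith
  then show ?thesis
  proof cases
    case 1
    have "deg_seq mu1 ! i = deg_seq mu2 ! i" if "i < r" for i
    proof -
      have "i < r - 1 \<or> i = r - 1"
        using that by linarith
      then show ?thesis
        using common 1 by auto
    qed
    then have "deg_seq mu1 = deg_seq mu2"
      using assms(3,4) by (intro nth_equalityI) auto
    then show ?thesis
      using inj_deg_seq by (simp add: inj_eq)
  next
    case 2
    then show ?thesis
      using last_degrees_if_R_part_eq[OF assms(1-4) r common 2 assms(6)]
        partitions_with_last_degrees[OF assms(1,3,4) r common] by simp
  next
    case 3
    then show ?thesis
      using last_degrees_if_R_part_eq[OF assms(2,1,4,3) r _ 3 assms(6)[symmetric]]
        partitions_with_last_degrees[OF assms(2,4,3) r] common by simp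
  qed
qed

end
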